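(* Let $\tau\in(0,1]$ and suppose $k\,\alpha^{(2-\tau)d}\ge 2$. Let $u,v\in V$ be distinct with $|\Gamma(u)\cap\Gamma(v)|\ge\tau d$. Then, under the Fast-Filter model described in the context, the expected number of indices $i\in[k]$ with $u\in S_i$ and $v\in S_i$ is at least $2$.
   Context: Let $G=(U,V,E)$ be a bipartite graph with $|U|=M$ and $|V|=N$. For $v\in V$ let $\Gamma(v)\subseteq U$ be its set of neighbours, and assume $|\Gamma(v)|=d\ge 1$ for every $v\in V$. Let $k=2^{m}$ and $\alpha=2^{-r}$, where $m,r$ are positive integers. Identify $[k]=\{1,\dots,k\}$ bijectively with the vector space $\mathrm{GF}(2)^m$ (for instance via the binary representation of $i-1$). Fast-Filter model: for each $u\in U$, independently draw a uniformly random matrix $A'_u\in\mathrm{GF}(2)^{r\times m}$ and a uniformly random vector $b'_u\in\mathrm{GF}(2)^{r}$; all of these are mutually independent. For $v\in V$, let $A^v$ be the $(dr)\times m$ matrix obtained by stacking the matrices $A'_u$, $u\in\Gamma(v)$, in a fixed order, and let $b^v\in\mathrm{GF}(2)^{dr}$ be obtained by stacking the $b'_u$, $u\in\Gamma(v)$, in the same order. For $i\in[k]$ (viewed as a vector in $\mathrm{GF}(2)^m$), the survival set is $S_i=\{v\in V: A^v i+b^v=0\}$, with arithmetic over $\mathrm{GF}(2)$. *)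

theory Defs
  imports "HOL-Probability.Probability" "HOL-Library.Z2"
begin

text \<open>An outcome of the Fast-Filter randomness is a pair (A, b) where A u is the r x m
  matrix A'_u (entry (j,l), j < r, l < m) and b u is the vector b'_u (entry j < r).
  Entries outside the relevant ranges (or for nodes outside U) are fixed to 0, so the
  uniform distribution on the resulting finite set is exactly the product of
  independent uniform choices of all A'_u, b'_u.\<close>

definition ff_space :: "'u set \<Rightarrow> nat \<Rightarrow> nat \<Rightarrow>
    (('u \<Rightarrow> nat \<Rightarrow> nat \<Rightarrow> bit) \<times> ('u \<Rightarrow> nat \<Rightarrow> bit)) set" where
  "ff_space U r m = {(A, b).
     (\<forall>u j l. (u \<notin> U \<or> r \<le> j \<or> m \<le> l) \<longrightarrow> A u j l = 0) \<and>
     (\<forall>u j. (u \<notin> U \<or> r \<le> j) \<longrightarrow> b u j = 0)}"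

definition ff_pmf :: "'u set \<Rightarrow> nat \<Rightarrow> nat \<Rightarrow>
    (('u \<Rightarrow> nat \<Rightarrow> nat \<Rightarrow> bit) \<times> ('u \<Rightarrow> nat \<Rightarrow> bit)) pmf" where
  "ff_pmf U r m = pmf_of_set (ff_space U r m)"

text \<open>Index i in [k] = {1..2^m} viewed as a vector of GF(2)^m: binary representation
  of i - 1 (component l = bit l).\<close>
definition idx_vec :: "nat \<Rightarrow> nat \<Rightarrow> bit" where
  "idx_vec i l = (if odd ((i - 1) div 2 ^ l) then 1 else 0)"

text \<open>v survives filter i iff A^v i + b^v = 0, i.e. every block A'_w i + b'_w, w in Gamma v,
  vanishes.\<close>
definition survives ::
  "('v \<Rightarrow> 'u set) \<Rightarrow> nat \<Rightarrow> nat \<Rightarrow>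
   (('u \<Rightarrow> nat \<Rightarrow> nat \<Rightarrow> bit) \<times> ('u \<Rightarrow> nat \<Rightarrow> bit)) \<Rightarrow> nat \<Rightarrow> 'v \<Rightarrow> bool" where
  "survives \<Gamma> r m \<omega> i v \<longleftrightarrow>
     (\<forall>w\<in>\<Gamma> v. \<forall>j<r. (\<Sum>l<m. fst \<omega> w j l * idx_vec i l) + snd \<omega> w j = 0)"

definition survival_set ::
  "'v set \<Rightarrow> ('v \<Rightarrow> 'u set) \<Rightarrow> nat \<Rightarrow> nat \<Rightarrow>
   (('u \<Rightarrow> nat \<Rightarrow> nat \<Rightarrow> bit) \<times> ('u \<Rightarrow> nat \<Rightarrow> bit)) \<Rightarrow> nat \<Rightarrow> 'v set" where
  "survival_set V \<Gamma> r m \<omega> i = {v \<in> V. survives \<Gamma> r m \<omega> i v}"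

end

theory Submission
  imports Defs
begin

text \<open>Both u and v survive filter i exactly when A'_w i + b'_w = 0 for every w in
  \<Gamma> u \<union> \<Gamma> v. The offsets b'_w are uniform and independent of everything else, so this
  happens with probability 2^(-r |\<Gamma> u \<union> \<Gamma> v|) for each fixed i, and
  |\<Gamma> u \<union> \<Gamma> v| = 2d - |\<Gamma> u \<inter> \<Gamma> v| \<le> (2 - \<tau>) d. Summing over the k indices, the expected
  number of common surviving filters is at least k \<alpha>^((2 - \<tau>) d) \<ge> 2.
  Uniformity of the event is shown by counting: adding a fixed vector c to the offsets
  is a bijection of the sample space which shifts the residues A'_w x + b'_w by c, so all
  2^(r |W|) possible residue patterns on a set W of nodes are equally frequent.\<close>

lemma bit_add_add_self: "(a::bit) + c + c = a"
  by (cases a; cases c) simp_all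

lemma bit_add_eq_right_iff: "(a::bit) + c = c \<longleftrightarrow> a = 0"
  by (cases a; cases c) simp_all

lemma restrict_eq_PiE_iff:
  "c \<in> A \<rightarrow>\<^sub>E B \<Longrightarrow> restrict f A = c \<longleftrightarrow> (\<forall>x\<in>A. f x = c x)"
  by (auto intro: PiE_ext)

lemma UNIV_bit: "(UNIV :: bit set) = {0, 1}"
  using bit.exhaust by auto

lemma finite_ff_space:
  assumes "finite U"
  shows "finite (ff_space U r m)"
proof -
  let ?D = "U \<times> {..<r} \<times> {..<m}" and ?D' = "U \<times> {..<r}"
  let ?restr = "\<lambda>(A, b). (restrict (\<lambda>(u, j, l). A u j l) ?D, restrict (\<lambda>(u, j). b u j) ?D')"
  have inj: "inj_on ?restr (ff_space U r m)"
  proof (rule inj_onI)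
    fix \<omega> \<omega>'
    assume "\<omega> \<in> ff_space U r m" "\<omega>' \<in> ff_space U r m" and eq: "?restr \<omega> = ?restr \<omega>'"
    moreover obtain A b A' b' where \<omega>: "\<omega> = (A, b)" "\<omega>' = (A', b')"
      by fastforce
    ultimately have zero: "\<forall>u j l. (u \<notin> U \<or> r \<le> j \<or> m \<le> l) \<longrightarrow> A u j l = 0 \<and> A' u j l = 0"
        "\<forall>u j. (u \<notin> U \<or> r \<le> j) \<longrightarrow> b u j = 0 \<and> b' u j = 0"
      by (auto simp: ff_space_def)
    have "A u j l = A' u j l" for u j l
      using fun_cong[OF arg_cong[OF eq, of fst], of "(u, j, l)"] zero(1) \<omega>
      by (cases "u \<in> U \<and> j < r \<and> l < m") auto
    moreover have "b u j = b' u j" for u j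
      using fun_cong[OF arg_cong[OF eq, of snd], of "(u, j)"] zero(2) \<omega>
      by (cases "u \<in> U \<and> j < r") auto
    ultimately show "\<omega> = \<omega>'"
      by (simp add: \<omega> fun_eq_iff)
  qed
  have "?restr ` ff_space U r m \<subseteq> (?D \<rightarrow>\<^sub>E UNIV) \<times> (?D' \<rightarrow>\<^sub>E UNIV)"
    by (simp add: image_subset_iff split: prod.split)
  moreover have "finite ((?D \<rightarrow>\<^sub>E (UNIV :: bit set)) \<times> (?D' \<rightarrow>\<^sub>E (UNIV :: bit set)))"
    using assms by (simp add: finite_PiE UNIV_bit)
  ultimately have "finite (?restr ` ff_space U r m)"
    by (rule finite_subset)
  then show ?thesis
    using inj by (rule finite_imageD)
qed

lemma ff_space_nonempty: "ff_space U r m \<noteq> {}"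
  by (auto simp: ff_space_def)

definition ff_residue :: "nat \<Rightarrow> (nat \<Rightarrow> bit) \<Rightarrow>
    ('u \<Rightarrow> nat \<Rightarrow> nat \<Rightarrow> bit) \<times> ('u \<Rightarrow> nat \<Rightarrow> bit) \<Rightarrow> 'u \<times> nat \<Rightarrow> bit" where
  "ff_residue m x \<omega> = (\<lambda>(w, j). (\<Sum>l<m. fst \<omega> w j l * x l) + snd \<omega> w j)"

definition shift_offsets :: "('u \<times> nat) set \<Rightarrow> ('u \<times> nat \<Rightarrow> bit) \<Rightarrow>
    ('u \<Rightarrow> nat \<Rightarrow> nat \<Rightarrow> bit) \<times> ('u \<Rightarrow> nat \<Rightarrow> bit) \<Rightarrow>
    ('u \<Rightarrow> nat \<Rightarrow> nat \<Rightarrow> bit) \<times> ('u \<Rightarrow> nat \<Rightarrow> bit)" where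
  "shift_offsets C c \<omega> =
     (fst \<omega>, \<lambda>w j. if (w, j) \<in> C then snd \<omega> w j + c (w, j) else snd \<omega> w j)"

lemma survives_iff_residues:
  "survives \<Gamma> r m \<omega> i v \<longleftrightarrow> (\<forall>p \<in> \<Gamma> v \<times> {..<r}. ff_residue m (idx_vec i) \<omega> p = 0)"
  by (auto simp: survives_def ff_residue_def)

text \<open>The default simp set turns bit addition into boolean xor, which derails the
  algebraic reasoning below; hence add_bit_eq_xor is removed locally.\<close>
lemma ff_residue_shift_offsets:
  "p \<in> C \<Longrightarrow> ff_residue m x (shift_offsets C c \<omega>) p = ff_residue m x \<omega> p + c p"
  by (cases p) (simp add: ff_residue_def shift_offsets_def add.assoc del: add_bit_eq_xor)

lemma shift_offsets_shift_offsets: "shift_offsets C c (shift_offsets C c \<omega>) = \<omega>"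
  by (cases \<omega>) (auto simp: shift_offsets_def bit_add_add_self intro!: ext)

lemma shift_offsets_in_ff_space:
  "C \<subseteq> U \<times> {..<r} \<Longrightarrow> \<omega> \<in> ff_space U r m \<Longrightarrow> shift_offsets C c \<omega> \<in> ff_space U r m"
  by (fastforce simp: ff_space_def shift_offsets_def)

lemma card_residue_fibre:
  assumes C: "C \<subseteq> U \<times> {..<r}" and c: "c \<in> C \<rightarrow>\<^sub>E UNIV"
  shows "card {\<omega> \<in> ff_space U r m. restrict (ff_residue m x \<omega>) C = c}
       = card {\<omega> \<in> ff_space U r m. \<forall>p\<in>C. ff_residue m x \<omega> p = 0}"
proof -
  have shifted_fibre: "restrict (ff_residue m x (shift_offsets C c \<omega>)) C = c
      \<longleftrightarrow> (\<forall>p\<in>C. ff_residue m x \<omega> p = 0)" for \<omega>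
    using c by (simp add: restrict_eq_PiE_iff ff_residue_shift_offsets bit_add_eq_right_iff
        del: add_bit_eq_xor)
  have "bij_betw (shift_offsets C c)
      {\<omega> \<in> ff_space U r m. \<forall>p\<in>C. ff_residue m x \<omega> p = 0}
      {\<omega> \<in> ff_space U r m. restrict (ff_residue m x \<omega>) C = c}"
  proof (rule bij_betw_byWitness[where f' = "shift_offsets C c"])
    show "shift_offsets C c ` {\<omega> \<in> ff_space U r m. restrict (ff_residue m x \<omega>) C = c}
        \<subseteq> {\<omega> \<in> ff_space U r m. \<forall>p\<in>C. ff_residue m x \<omega> p = 0}"
      using shifted_fibre[of "shift_offsets C c _"]
      by (auto simp: shift_offsets_shift_offsets shift_offsets_in_ff_space[OF C])
  qed (auto simp: shifted_fibre shift_offsets_shift_offsets shift_offsets_in_ff_space[OF C])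
  then show ?thesis
    by (simp add: bij_betw_same_card)
qed

lemma card_residues_vanish:
  assumes U: "finite U" and C: "C \<subseteq> U \<times> {..<r}"
  shows "card {\<omega> \<in> ff_space U r m. \<forall>p\<in>C. ff_residue m x \<omega> p = 0} * 2 ^ card C
       = card (ff_space U r m)"
proof -
  let ?S = "ff_space U r m" and ?P = "C \<rightarrow>\<^sub>E (UNIV :: bit set)"
  let ?fibre = "\<lambda>c. {\<omega> \<in> ?S. restrict (ff_residue m x \<omega>) C = c}"
  have "finite C"
    using U C finite_subset by fastforce
  then have P: "finite ?P" "card ?P = 2 ^ card C"
    by (simp_all add: finite_PiE card_PiE UNIV_bit numeral_2_eq_2)
  have "card ?S = card (\<Union>c\<in>?P. ?fibre c)"
    by (rule arg_cong[where f = card]) auto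
  also have "\<dots> = (\<Sum>c\<in>?P. card (?fibre c))"
    using P(1) finite_ff_space[OF U] by (intro card_UN_disjoint) auto
  also have "\<dots> = card {\<omega> \<in> ?S. \<forall>p\<in>C. ff_residue m x \<omega> p = 0} * 2 ^ card C"
    by (simp add: card_residue_fibre[OF C] P(2))
  finally show ?thesis ..
qed

lemma prob_residues_vanish:
  assumes "finite U" and "C \<subseteq> U \<times> {..<r}"
  shows "measure_pmf.prob (ff_pmf U r m) {\<omega>. \<forall>p\<in>C. ff_residue m x \<omega> p = 0} = 1 / 2 ^ card C"
proof -
  let ?S = "ff_space U r m" and ?N = "card {\<omega> \<in> ff_space U r m. \<forall>p\<in>C. ff_residue m x \<omega> p = 0}"
  have S: "real (card ?S) = real ?N * 2 ^ card C"
    using arg_cong[OF card_residues_vanish[OF assms, of m x], of real] by simp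
  have "card ?S > 0"
    using finite_ff_space[OF assms(1)] ff_space_nonempty by (simp add: card_gt_0_iff)
  then have "?N > 0"
    using card_residues_vanish[OF assms, of m x] by (intro gr0I) simp
  have "measure_pmf.prob (ff_pmf U r m) {\<omega>. \<forall>p\<in>C. ff_residue m x \<omega> p = 0} = ?N / card ?S"
    by (simp add: ff_pmf_def measure_pmf_of_set finite_ff_space[OF assms(1)] ff_space_nonempty
        Int_def)
  also have "\<dots> = 1 / 2 ^ card C"
    using \<open>?N > 0\<close> by (simp add: S)
  finally show ?thesis .
qed

lemma expectation_card_filter:
  fixes p :: "'a pmf"
  assumes "finite I"
  shows "measure_pmf.expectation p (\<lambda>\<omega>. real (card {i \<in> I. P i \<omega>}))
       = (\<Sum>i\<in>I. measure_pmf.prob p {\<omega>. P i \<omega>})"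
proof -
  have "real (card {i \<in> I. P i \<omega>}) = (\<Sum>i\<in>I. indicator {\<omega>. P i \<omega>} \<omega>)" for \<omega>
    using assms by (simp add: indicator_def sum.inter_filter[symmetric] Int_def)
  then show ?thesis
    by (simp add: Bochner_Integration.integral_sum less_top[symmetric])
qed

lemma card_Un_le_of_card_Int_ge:
  assumes "finite A" "finite B" "card A = d" "card B = d" "\<tau> * real d \<le> real (card (A \<inter> B))"
  shows "real (card (A \<union> B)) \<le> (2 - \<tau>) * real d"
proof -
  have "real (card (A \<union> B)) = real (card A) + real (card B) - real (card (A \<inter> B))"
    using card_Un_Int[OF assms(1,2)] by simp
  then show ?thesis
    using assms(3-5) by (simp add: algebra_simps)
qed

theorem lemma1:
  fixes U :: "'u set" and V :: "'v set" and \<Gamma> :: "'v \<Rightarrow> 'u set"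
    and d m r k :: nat and \<alpha> \<tau> :: real and u v :: 'v
  assumes "finite U"
    and "\<forall>x\<in>V. \<Gamma> x \<subseteq> U \<and> card (\<Gamma> x) = d"
    and "d \<ge> 1"
    and "m > 0" and "r > 0"
    and "k = 2 ^ m" and "\<alpha> = 1 / 2 ^ r"
    and "0 < \<tau>" and "\<tau> \<le> 1"
    and "real k * \<alpha> powr ((2 - \<tau>) * real d) \<ge> 2"
    and "u \<in> V" and "v \<in> V" and "u \<noteq> v"
    and "real (card (\<Gamma> u \<inter> \<Gamma> v)) \<ge> \<tau> * real d"
  shows "measure_pmf.expectation (ff_pmf U r m)
           (\<lambda>\<omega>. real (card {i \<in> {1..k}. u \<in> survival_set V \<Gamma> r m \<omega> i
                                        \<and> v \<in> survival_set V \<Gamma> r m \<omega> i})) \<ge> 2"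
proof -
  let ?W = "\<Gamma> u \<union> \<Gamma> v"
  have W: "?W \<times> {..<r} \<subseteq> U \<times> {..<r}" "finite (\<Gamma> u)" "finite (\<Gamma> v)"
    using assms(1,2,11,12) by (auto intro: finite_subset)
  have card_W: "real (card ?W) \<le> (2 - \<tau>) * real d"
    using assms(2,11,12,14) by (intro card_Un_le_of_card_Int_ge W(2,3)) auto
  have both_survive: "u \<in> survival_set V \<Gamma> r m \<omega> i \<and> v \<in> survival_set V \<Gamma> r m \<omega> i
      \<longleftrightarrow> (\<forall>p\<in>?W \<times> {..<r}. ff_residue m (idx_vec i) \<omega> p = 0)" for \<omega> i
    using assms(11,12) by (auto simp: survival_set_def survives_iff_residues)
  have "measure_pmf.expectation (ff_pmf U r m)
           (\<lambda>\<omega>. real (card {i \<in> {1..k}. u \<in> survival_set V \<Gamma> r m \<omega> i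
                                        \<and> v \<in> survival_set V \<Gamma> r m \<omega> i}))
      = (\<Sum>i\<in>{1..k}. measure_pmf.prob (ff_pmf U r m)
           {\<omega>. \<forall>p\<in>?W \<times> {..<r}. ff_residue m (idx_vec i) \<omega> p = 0})"
    unfolding both_survive by (rule expectation_card_filter) simp
  also have "\<dots> = real k * (1 / 2 ^ r) ^ card ?W"
    by (simp only: prob_residues_vanish[OF assms(1) W(1)])
      (simp add: card_cartesian_product power_mult[symmetric] power_one_over mult.commute)
  also have "\<dots> = real k * \<alpha> powr real (card ?W)"
    using assms(7) by (simp add: powr_realpow)
  also have "\<dots> \<ge> real k * \<alpha> powr ((2 - \<tau>) * real d)"
    using assms(7) card_W by (intro mult_left_mono powr_mono') simp_all
  finally show ?thesis
    using assms(10) by linarith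
qed

end
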